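(* Let $n\ge3$ and equip $\mathcal{H}_n$ with the word metric for the generating set $\{g_1,\dots,g_{n-1}\}$. For $k\in\mathbb{N}$ let $B_k$ be the ball of radius $k$ about the identity, $C_k$ the set of elements of $\mathcal{H}_n$ of complexity exactly $k$, and $D_k\subseteq C_k$ the set of elements of $C_k$ of word length at most $k\log_{2n-2}k$. Then $$\lim_{k\to\infty}\frac{|D_k|}{|C_k|}=0.$$
   Context: Let $\mathbb{N}=\{1,2,3,\dots\}$, $\mathbb{Z}_n$ the integers modulo $n$, $R_n=\mathbb{Z}_n\times\mathbb{N}$ (ray $i$ is $\{(i,k):k\in\mathbb{N}\}$). Permutations act on the right. The Houghton group $\mathcal{H}_n$ is the group of permutations $\sigma$ of $R_n$ for which there exist $N\ge0$ and integers $t_i(\sigma)$ with $(i,k)\sigma=(i,k+t_i(\sigma))$ for all $i\in\mathbb{Z}_n$, $k\ge N$. For distinct $i,j$, $g_{ij}\in\mathcal{H}_n$ is given by $(i,m)g_{ij}=(i,m-1)$ for $m>1$, $(i,1)g_{ij}=(j,1)$, $(j,m)g_{ij}=(j,m+1)$ for $m\ge1$, fixing all points on other rays; $g_i=g_{i\,i+1}$. For $\sigma\in\mathcal{H}_n$ and $i\in\mathbb{Z}_n$, $p_i(\sigma)$ is the largest integer $k\ge1$ with $(i,k)\sigma\ne(i,k+t_i(\sigma))$ (automatically true if $k+t_i(\sigma)\le0$), and $0$ if no such $k$ exists; the complexity is $P(\sigma)=\sum_i p_i(\sigma)$. *)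

theory Defs
  imports Complex_Main
begin

text \<open>Points of R_n: pairs (i,k) with i < n (ray index, representing Z_n) and k \<ge> 1.
  Permutations of R_n are represented as functions on nat \<times> nat that are
  the identity outside R_n. Permutations act on the right: the image of x
  under \<sigma> is written \<sigma> x, and the product \<sigma>\<tau> (first \<sigma>, then \<tau>) is \<tau> \<circ> \<sigma>.\<close>

definition rays :: "nat \<Rightarrow> (nat \<times> nat) set" where
  "rays n = {(i, k). i < n \<and> 1 \<le> k}"

definition houghton :: "nat \<Rightarrow> (nat \<times> nat \<Rightarrow> nat \<times> nat) set" where
  "houghton n = {\<sigma>. bij_betw \<sigma> (rays n) (rays n) \<and> (\<forall>x. x \<notin> rays n \<longrightarrow> \<sigma> x = x) \<and>
     (\<exists>N::nat. \<exists>t::nat \<Rightarrow> int. \<forall>i<n. \<forall>k. N \<le> k \<and> 1 \<le> k \<longrightarrow>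
        1 \<le> int k + t i \<and> \<sigma> (i, k) = (i, nat (int k + t i)))}"

text \<open>The translation amount t_i(\<sigma>) (unique for \<sigma> in the Houghton group).\<close>
definition transl :: "(nat \<times> nat \<Rightarrow> nat \<times> nat) \<Rightarrow> nat \<Rightarrow> int" where
  "transl \<sigma> i = (THE t. \<exists>N::nat. \<forall>k. N \<le> k \<and> 1 \<le> k \<longrightarrow>
        1 \<le> int k + t \<and> \<sigma> (i, k) = (i, nat (int k + t)))"

definition defect :: "(nat \<times> nat \<Rightarrow> nat \<times> nat) \<Rightarrow> nat \<Rightarrow> nat \<Rightarrow> bool" where
  "defect \<sigma> i k = (int k + transl \<sigma> i \<le> 0 \<or> \<sigma> (i, k) \<noteq> (i, nat (int k + transl \<sigma> i)))"

definition pcomp :: "(nat \<times> nat \<Rightarrow> nat \<times> nat) \<Rightarrow> nat \<Rightarrow> nat" where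
  "pcomp \<sigma> i = (if \<exists>k\<ge>1. defect \<sigma> i k then Max {k. 1 \<le> k \<and> defect \<sigma> i k} else 0)"

definition complexity :: "nat \<Rightarrow> (nat \<times> nat \<Rightarrow> nat \<times> nat) \<Rightarrow> nat" where
  "complexity n \<sigma> = (\<Sum>i<n. pcomp \<sigma> i)"

definition gij :: "nat \<Rightarrow> nat \<Rightarrow> nat \<times> nat \<Rightarrow> nat \<times> nat" where
  "gij i j = (\<lambda>(a, m). if a = i \<and> m > 1 then (i, m - 1)
                       else if a = i \<and> m = 1 then (j, 1)
                       else if a = j \<and> m \<ge> 1 then (j, m + 1)
                       else (a, m))"

definition gens :: "nat \<Rightarrow> (nat \<times> nat \<Rightarrow> nat \<times> nat) set" where
  "gens n = {gij i ((i + 1) mod n) | i. 1 \<le> i \<and> i \<le> n - 1}"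

definition sym_gens :: "nat \<Rightarrow> (nat \<times> nat \<Rightarrow> nat \<times> nat) set" where
  "sym_gens n = gens n \<union> inv ` gens n"

text \<open>Evaluation of a word (right action: first letter acts first).\<close>
definition word_eval :: "(nat \<times> nat \<Rightarrow> nat \<times> nat) list \<Rightarrow> nat \<times> nat \<Rightarrow> nat \<times> nat" where
  "word_eval ws = fold (\<lambda>s acc. s \<circ> acc) ws id"

definition word_length :: "nat \<Rightarrow> (nat \<times> nat \<Rightarrow> nat \<times> nat) \<Rightarrow> nat" where
  "word_length n \<sigma> = (LEAST m. \<exists>ws. length ws = m \<and> set ws \<subseteq> sym_gens n \<and> word_eval ws = \<sigma>)"

definition ball :: "nat \<Rightarrow> nat \<Rightarrow> (nat \<times> nat \<Rightarrow> nat \<times> nat) set" where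
  "ball n k = {\<sigma> \<in> houghton n. word_length n \<sigma> \<le> k}"

definition Cset :: "nat \<Rightarrow> nat \<Rightarrow> (nat \<times> nat \<Rightarrow> nat \<times> nat) set" where
  "Cset n k = {\<sigma> \<in> houghton n. complexity n \<sigma> = k}"

definition Dset :: "nat \<Rightarrow> nat \<Rightarrow> (nat \<times> nat \<Rightarrow> nat \<times> nat) set" where
  "Dset n k = {\<sigma> \<in> Cset n k. real (word_length n \<sigma>) \<le> real k * log (real (2 * n - 2)) (real k)}"

end

theory Submission
  imports Defs "HOL-Combinatorics.Permutations"
begin

text \<open>
  Every element of the Houghton group is a word in the generators: composing with powers of
  the \<open>g\<^sub>i\<^sub>0\<close> removes the translations on the rays \<open>1, \<dots>, n - 1\<close>; a permutation of the
  rays that eventually translates ray \<open>0\<close> and fixes the other rays cannot translate at all,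
  so what is left is a finitary permutation, and every transposition of two points is a
  conjugate of \<open>g\<^sub>c\<^sub>b g\<^sub>b\<^sub>a g\<^sub>a\<^sub>c\<close>, which swaps \<open>(a, 1)\<close> and \<open>(b, 1)\<close>.
  Hence an element of word length at most \<open>R = k log\<^bsub>2n-2\<^esub> k\<close> is the value of a reduced
  word of length at most \<open>R\<close> in the \<open>2n - 2\<close> letters, and there are fewer than
  \<open>(2n - 3)^(R + 1) \<le> (2n - 3) k^(\<alpha> k)\<close> of them, where \<open>\<alpha> = log\<^bsub>2n-2\<^esub> (2n - 3) < 1\<close>.
  On the other hand the \<open>(k - 1)!\<close> permutations of the first \<open>k\<close> points of ray \<open>0\<close> that
  move \<open>(0, k)\<close> all have complexity \<open>k\<close>, and \<open>k! \<ge> k^k / e^k\<close>. So the ratio is at most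
  \<open>(2n - 3) k exp (k - (1 - \<alpha>) k ln k)\<close>, which tends to \<open>0\<close>.
\<close>

section \<open>The maps \<open>g\<^sub>i\<^sub>j\<close>\<close>

lemma gij_apply:
  "gij i j (a, m) = (if a = i \<and> m > 1 then (i, m - 1)
                     else if a = i \<and> m = 1 then (j, 1)
                     else if a = j \<and> m \<ge> 1 then (j, m + 1)
                     else (a, m))"
  by (simp add: gij_def)

lemma gij_comp_inverse: "i \<noteq> j \<Longrightarrow> gij j i \<circ> gij i j = id"
  by (auto simp: gij_apply fun_eq_iff)

lemma inv_gij: "i \<noteq> j \<Longrightarrow> inv (gij i j) = gij j i"
  by (rule inv_unique_comp) (auto simp: gij_comp_inverse)

lemma gij_comp_gij: "i \<noteq> j \<Longrightarrow> j \<noteq> k \<Longrightarrow> i \<noteq> k \<Longrightarrow> gij j k \<circ> gij i j = gij i k"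
  by (auto simp: gij_apply fun_eq_iff)

lemma gij_comp_transpose:
  "a \<noteq> b \<Longrightarrow> b \<noteq> c \<Longrightarrow> a \<noteq> c \<Longrightarrow>
   gij c b \<circ> gij b a \<circ> gij a c = Transposition.transpose (a, 1) (b, 1)"
  by (auto simp: gij_apply Transposition.transpose_def fun_eq_iff)

lemma gij_permutes_rays:
  assumes "i < n" "j < n" "i \<noteq> j"
  shows "gij i j permutes rays n"
proof (rule bij_imp_permutes)
  have maps: "gij a b x \<in> rays n" if "a < n" "b < n" "x \<in> rays n" for a b x
    using that by (cases x) (auto simp: gij_apply rays_def)
  show "bij_betw (gij i j) (rays n) (rays n)"
    by (rule bij_betw_byWitness[where f' = "gij j i"])
      (use assms maps gij_comp_inverse[of i j] gij_comp_inverse[of j i] in \<open>auto simp: pointfree_idE\<close>)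
  show "gij i j x = x" if "x \<notin> rays n" for x
    using that assms by (cases x) (auto simp: gij_apply rays_def)
qed

lemma funpow_gij_target: "i \<noteq> j \<Longrightarrow> 1 \<le> k \<Longrightarrow> (gij i j ^^ m) (j, k) = (j, k + m)"
  by (induction m) (auto simp: gij_apply)

lemma funpow_gij_source: "i \<noteq> j \<Longrightarrow> m < k \<Longrightarrow> (gij i j ^^ m) (i, k) = (i, k - m)"
  by (induction m) (auto simp: gij_apply)

lemma funpow_gij_other: "a \<noteq> i \<Longrightarrow> a \<noteq> j \<Longrightarrow> (gij i j ^^ m) (a, k) = (a, k)"
  by (induction m) (auto simp: gij_apply)

lemma funpow_comp_inverse:
  fixes f g :: "'a \<Rightarrow> 'a"
  shows "g \<circ> f = id \<Longrightarrow> (g ^^ m) \<circ> (f ^^ m) = id"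
proof (induction m)
  case (Suc m)
  have "g (f y) = y" for y
    using Suc.prems by (simp add: fun_eq_iff)
  then have "(g ^^ Suc m) ((f ^^ Suc m) x) = (g ^^ m) ((f ^^ m) x)" for x
    unfolding funpow_Suc_right[where f = g] by simp
  then show ?case
    using Suc by (simp add: fun_eq_iff)
qed simp

section \<open>The subgroup generated by the \<open>g\<^sub>i\<close>\<close>

lemma word_eval_Nil [simp]: "word_eval [] = id"
  by (simp add: word_eval_def)

lemma word_eval_Cons [simp]: "word_eval (s # ws) = word_eval ws \<circ> s"
proof -
  have "fold (\<lambda>s acc. s \<circ> acc) ws (id \<circ> s) = fold (\<lambda>s acc. s \<circ> acc) ws id \<circ> s"
    by (rule fold_commute_apply[where h = "\<lambda>acc. acc \<circ> s" and s = id, symmetric]) (simp add: fun_eq_iff)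
  then show ?thesis
    by (simp add: word_eval_def)
qed

lemma word_eval_append [simp]: "word_eval (xs @ ys) = word_eval ys \<circ> word_eval xs"
  by (induction xs) (simp_all add: o_assoc)

definition generated :: "nat \<Rightarrow> (nat \<times> nat \<Rightarrow> nat \<times> nat) set" where
  "generated n = word_eval ` {ws. set ws \<subseteq> sym_gens n}"

lemma id_in_generated: "id \<in> generated n"
  unfolding generated_def by (rule image_eqI[of _ _ "[]"]) auto

lemma comp_in_generated: "f \<in> generated n \<Longrightarrow> g \<in> generated n \<Longrightarrow> g \<circ> f \<in> generated n"
  unfolding generated_def by (auto intro!: image_eqI[of _ _ "_ @ _"])

lemma sym_gens_subset_generated: "sym_gens n \<subseteq> generated n"
  unfolding generated_def by (auto intro!: image_eqI[of _ _ "[_]"])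

lemma funpow_in_generated: "f \<in> generated n \<Longrightarrow> f ^^ m \<in> generated n"
  by (induction m) (auto intro: id_in_generated comp_in_generated)

lemma Suc_mod_neq: "1 \<le> i \<Longrightarrow> i < n \<Longrightarrow> Suc i mod n \<noteq> i"
  by (cases "Suc i < n") (auto simp: mod_if)

lemma sym_gens_eq: "sym_gens n = (\<Union>i\<in>{1..<n}. {gij i ((i + 1) mod n), gij ((i + 1) mod n) i})"
proof -
  have gens: "gens n = (\<lambda>i. gij i ((i + 1) mod n)) ` {1..<n}"
    unfolding gens_def by force
  have "inv ` gens n = (\<lambda>i. gij ((i + 1) mod n) i) ` {1..<n}"
    unfolding gens image_image by (rule image_cong) (auto simp: inv_gij Suc_mod_neq[THEN not_sym])
  then show ?thesis
    unfolding sym_gens_def gens by blast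
qed

lemma sym_gens_permutes_rays: "s \<in> sym_gens n \<Longrightarrow> s permutes rays n"
  by (auto simp: sym_gens_eq Suc_mod_neq Suc_mod_neq[THEN not_sym] intro!: gij_permutes_rays)

lemma sym_gens_has_inverse:
  assumes "s \<in> sym_gens n"
  shows "\<exists>s'\<in>sym_gens n. s' \<circ> s = id \<and> s \<circ> s' = id"
proof -
  obtain i where i: "i \<in> {1..<n}" and s: "s \<in> {gij i ((i + 1) mod n), gij ((i + 1) mod n) i}"
    using assms by (auto simp: sym_gens_eq)
  then have "{gij i ((i + 1) mod n), gij ((i + 1) mod n) i} \<subseteq> sym_gens n"
    by (auto simp: sym_gens_eq)
  moreover have "gij ((i + 1) mod n) i \<circ> gij i ((i + 1) mod n) = id" "gij i ((i + 1) mod n) \<circ> gij ((i + 1) mod n) i = id"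
    using i by (simp_all add: gij_comp_inverse Suc_mod_neq Suc_mod_neq[THEN not_sym])
  ultimately show ?thesis
    using s by blast
qed

lemma generated_permutes_rays: "f \<in> generated n \<Longrightarrow> f permutes rays n"
proof -
  have "set ws \<subseteq> sym_gens n \<Longrightarrow> word_eval ws permutes rays n" for ws
    by (induction ws) (auto intro: permutes_compose sym_gens_permutes_rays)
  then show "f \<in> generated n \<Longrightarrow> f permutes rays n"
    unfolding generated_def by blast
qed

lemma generated_has_inverse: "f \<in> generated n \<Longrightarrow> \<exists>g\<in>generated n. g \<circ> f = id"
proof -
  have "set ws \<subseteq> sym_gens n \<Longrightarrow> \<exists>g\<in>generated n. g \<circ> word_eval ws = id" for ws
  proof (induction ws)
    case Nil
    show ?case
      using id_in_generated by (intro bexI[of _ id]) simp_all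
  next
    case (Cons s ws)
    have "set ws \<subseteq> sym_gens n"
      using Cons.prems by simp
    then obtain g where g: "g \<in> generated n" "g \<circ> word_eval ws = id"
      using Cons.IH by blast
    obtain s' where s': "s' \<in> sym_gens n" "s' \<circ> s = id"
      using sym_gens_has_inverse[of s n] Cons.prems by (meson list.set_intros(1) subsetD)
    have "s' \<circ> g \<in> generated n"
      using g s' sym_gens_subset_generated comp_in_generated by blast
    moreover have "(s' \<circ> g) \<circ> word_eval (s # ws) = s' \<circ> (g \<circ> word_eval ws) \<circ> s"
      by (simp add: comp_assoc)
    then have "(s' \<circ> g) \<circ> word_eval (s # ws) = id"
      using g(2) s'(2) by simp
    ultimately show ?case
      by blast
  qed
  then show "f \<in> generated n \<Longrightarrow> \<exists>g\<in>generated n. g \<circ> f = id"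
    unfolding generated_def by blast
qed

lemma gij_in_generated:
  assumes "i < n" "j < n" "i \<noteq> j"
  shows "gij i j \<in> generated n"
proof -
  have gen: "gij a (a + 1) \<in> generated n" "gij (a + 1) a \<in> generated n"
    if "1 \<le> a" "a + 1 < n" for a
    using that sym_gens_subset_generated unfolding sym_gens_eq by (force intro!: UN_I[of a])+
  \<comment> \<open>the generators join the rays along the path \<open>1, 2, \<dots>, n - 1, 0\<close>\<close>
  have to_zero: "gij a 0 \<in> generated n \<and> gij 0 a \<in> generated n" if "1 \<le> a" "a \<le> n - 1" for a
    using that(2,1)
  proof (induction rule: inc_induct)
    case base
    then show ?case
      using sym_gens_subset_generated unfolding sym_gens_eq by (force intro!: UN_I[of "n - 1"])
  next
    case (step a)
    then have "gij (a + 1) 0 \<circ> gij a (a + 1) \<in> generated n" "gij (a + 1) a \<circ> gij 0 (a + 1) \<in> generated n"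
      using gen by (auto intro: comp_in_generated)
    then show ?case
      using step.prems by (simp add: gij_comp_gij)
  qed
  consider "i = 0" | "j = 0" | "i \<noteq> 0" "j \<noteq> 0"
    by blast
  then show ?thesis
  proof cases
    case 3
    then have "gij 0 j \<circ> gij i 0 \<in> generated n"
      using assms to_zero by (auto intro: comp_in_generated)
    then show ?thesis
      using assms 3 by (simp add: gij_comp_gij)
  qed (use assms to_zero in auto)
qed

section \<open>Finitary permutations\<close>

lemma comp_transpose_comp:
  fixes p q :: "'a \<Rightarrow> 'a"
  assumes "q \<circ> p = id" "p \<circ> q = id"
  shows "p \<circ> Transposition.transpose x y \<circ> q = Transposition.transpose (p x) (p y)"
proof
  fix z
  have "p (q w) = w" "q (p w) = w" for w
    using assms by (simp_all add: pointfree_idE)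
  then show "(p \<circ> Transposition.transpose x y \<circ> q) z = Transposition.transpose (p x) (p y) z"
    unfolding Transposition.transpose_def by auto
qed

lemma third_ray:
  fixes a b :: nat
  assumes "n \<ge> 3"
  obtains c where "c < n" "c \<noteq> a" "c \<noteq> b"
proof -
  have "\<exists>c \<le> 2. c \<noteq> a \<and> c \<noteq> b"
    by presburger
  then obtain c where "c \<le> 2" "c \<noteq> a" "c \<noteq> b"
    by blast
  then show ?thesis
    using assms that[of c] by auto
qed

lemma transpose_in_generated_distinct_rays:
  assumes "n \<ge> 3" "a < n" "b < n" "a \<noteq> b" "1 \<le> k" "1 \<le> l"
  shows "Transposition.transpose (a, k) (b, l) \<in> generated n"
proof -
  obtain c where c: "c < n" "c \<noteq> a" "c \<noteq> b"
    using third_ray[OF assms(1)] .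
  have "gij c b \<circ> gij b a \<circ> gij a c \<in> generated n"
    using assms c by (intro comp_in_generated gij_in_generated) auto
  then have t: "Transposition.transpose (a, 1) (b, 1) \<in> generated n"
    using assms c by (simp add: gij_comp_transpose)
  define p where "p = (gij c a ^^ (k - 1)) \<circ> (gij c b ^^ (l - 1))"
  define q where "q = (gij b c ^^ (l - 1)) \<circ> (gij a c ^^ (k - 1))"
  have "p \<in> generated n" "q \<in> generated n"
    unfolding p_def q_def using assms c by (simp_all add: comp_in_generated funpow_in_generated gij_in_generated)
  then have "p \<circ> Transposition.transpose (a, 1) (b, 1) \<circ> q \<in> generated n"
    using t by (simp add: comp_in_generated)
  moreover have "q \<circ> p = id"
  proof -
    have "q \<circ> p = (gij b c ^^ (l - 1)) \<circ> ((gij a c ^^ (k - 1)) \<circ> (gij c a ^^ (k - 1))) \<circ> (gij c b ^^ (l - 1))"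
      by (simp add: p_def q_def comp_assoc)
    then show ?thesis
      using c by (simp add: funpow_comp_inverse gij_comp_inverse)
  qed
  moreover have "p \<circ> q = id"
  proof -
    have "p \<circ> q = (gij c a ^^ (k - 1)) \<circ> ((gij c b ^^ (l - 1)) \<circ> (gij b c ^^ (l - 1))) \<circ> (gij a c ^^ (k - 1))"
      by (simp add: p_def q_def comp_assoc)
    then show ?thesis
      using c by (simp add: funpow_comp_inverse gij_comp_inverse)
  qed
  moreover have "p (a, 1) = (a, k)" "p (b, 1) = (b, l)"
    unfolding p_def using assms c by (simp_all add: funpow_gij_other funpow_gij_target)
  ultimately show ?thesis
    by (simp add: comp_transpose_comp)
qed

lemma transpose_in_generated:
  assumes n: "n \<ge> 3" and "x \<in> rays n" "y \<in> rays n"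
  shows "Transposition.transpose x y \<in> generated n"
proof -
  obtain a k b l where xy: "x = (a, k)" "y = (b, l)" "a < n" "b < n" "1 \<le> k" "1 \<le> l"
    using assms by (auto simp: rays_def)
  consider "x = y" | "a \<noteq> b" | "x \<noteq> y" "a = b"
    by blast
  then show ?thesis
  proof cases
    case 3
    obtain c where c: "c < n" "c \<noteq> a"
      using third_ray[OF n] by metis
    let ?z = "(c, 1)"
    have "Transposition.transpose x ?z \<circ> Transposition.transpose ?z y \<circ> Transposition.transpose x ?z \<in> generated n"
      using xy c 3 n by (auto intro!: comp_in_generated transpose_in_generated_distinct_rays)
    then show ?thesis
      using xy c 3 by (simp add: transpose_comp_triple)
  qed (use xy n id_in_generated transpose_in_generated_distinct_rays in auto)
qed

lemma permutes_in_generated: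
  assumes "n \<ge> 3" "finite A" "A \<subseteq> rays n" "p permutes A"
  shows "p \<in> generated n"
  using assms(4,2)
proof (induction rule: permutes_induct)
  case id
  then show ?case
    by (rule id_in_generated)
next
  case (swap a b p)
  then show ?case
    using assms(1,3) transpose_in_generated comp_in_generated by blast
qed

section \<open>Generation of the Houghton group\<close>

definition translates_from :: "nat \<Rightarrow> (nat \<times> nat \<Rightarrow> nat \<times> nat) \<Rightarrow> (nat \<Rightarrow> int) \<Rightarrow> nat \<Rightarrow> bool" where
  "translates_from n f t N \<longleftrightarrow> (\<forall>i<n. \<forall>k\<ge>N. 1 \<le> int k + t i \<and> f (i, k) = (i, nat (int k + t i)))"

lemma translates_from_cong:
  "translates_from n f t N \<Longrightarrow> (\<And>i. i < n \<Longrightarrow> t i = u i) \<Longrightarrow> translates_from n f u N"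
  unfolding translates_from_def by auto

lemma translates_from_comp:
  assumes f: "translates_from n f t N" and g: "translates_from n g u M"
  shows "translates_from n (g \<circ> f) (\<lambda>i. t i + u i) (N + M + (\<Sum>i<n. nat \<bar>t i\<bar>))"
  unfolding translates_from_def
proof (intro allI impI)
  fix i k
  assume i: "i < n" and k: "N + M + (\<Sum>i<n. nat \<bar>t i\<bar>) \<le> k"
  have "nat \<bar>t i\<bar> \<le> (\<Sum>i<n. nat \<bar>t i\<bar>)"
    using i by (intro member_le_sum) auto
  then have "M \<le> nat (int k + t i)"
    using k by linarith
  then have "1 \<le> int (nat (int k + t i)) + u i \<and> g (i, nat (int k + t i)) = (i, nat (int (nat (int k + t i)) + u i))"
    using g i unfolding translates_from_def by blast
  moreover have "1 \<le> int k + t i" "f (i, k) = (i, nat (int k + t i))"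
    using f i k unfolding translates_from_def by auto
  ultimately show "1 \<le> int k + (t i + u i) \<and> (g \<circ> f) (i, k) = (i, nat (int k + (t i + u i)))"
    by (simp add: add.assoc)
qed

lemma funpow_gij_translates_from:
  assumes "i \<noteq> j"
  shows "translates_from n (gij i j ^^ m) (\<lambda>r. if r = i then - int m else if r = j then int m else 0) (m + 1)"
  using assms
  by (auto simp: translates_from_def funpow_gij_source funpow_gij_target funpow_gij_other nat_diff_distrib)

lemma houghton_translates_from:
  assumes "\<sigma> \<in> houghton n"
  obtains t N where "translates_from n \<sigma> t N"
proof -
  obtain N t where "\<forall>i<n. \<forall>k. N \<le> k \<and> 1 \<le> k \<longrightarrow> 1 \<le> int k + t i \<and> \<sigma> (i, k) = (i, nat (int k + t i))"
    using assms unfolding houghton_def by blast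
  then have "translates_from n \<sigma> t (Suc N)"
    unfolding translates_from_def by auto
  then show ?thesis
    using that by blast
qed

lemma houghton_permutes_rays: "\<sigma> \<in> houghton n \<Longrightarrow> \<sigma> permutes rays n"
  unfolding houghton_def by (auto intro: bij_imp_permutes)

lemma generated_translation_pair:
  assumes "j < n" "j \<noteq> 0"
  shows "\<exists>h\<in>generated n. \<exists>N. translates_from n h (\<lambda>i. if i = j then w else if i = 0 then - w else 0) N"
proof (cases "w \<ge> 0")
  case True
  have "translates_from n (gij 0 j ^^ nat w) (\<lambda>i. if i = j then w else if i = 0 then - w else 0) (nat w + 1)"
    by (rule translates_from_cong[OF funpow_gij_translates_from[of 0 j]]) (use assms True in auto)
  moreover have "gij 0 j ^^ nat w \<in> generated n"
    using assms by (intro funpow_in_generated gij_in_generated) auto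
  ultimately show ?thesis
    by blast
next
  case False
  have "translates_from n (gij j 0 ^^ nat (- w)) (\<lambda>i. if i = j then w else if i = 0 then - w else 0) (nat (- w) + 1)"
    by (rule translates_from_cong[OF funpow_gij_translates_from[of j 0]]) (use assms False in auto)
  moreover have "gij j 0 ^^ nat (- w) \<in> generated n"
    using assms by (intro funpow_in_generated gij_in_generated) auto
  ultimately show ?thesis
    by blast
qed

lemma generated_translation_exists:
  assumes "J \<subseteq> {1..<n}"
  shows "\<exists>h\<in>generated n. \<exists>s N. translates_from n h (\<lambda>i. if i \<in> J then w i else if i = 0 then s else 0) N"
proof -
  have "finite J"
    using assms finite_subset by blast
  then show ?thesis
    using assms
  proof (induction J rule: finite_induct)
    case empty
    have "translates_from n id (\<lambda>i. if i \<in> {} then w i else if i = 0 then 0 else 0) 1"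
      by (simp add: translates_from_def)
    then show ?case
      using id_in_generated by blast
  next
    case (insert j J)
    then obtain h s N where h: "h \<in> generated n" "translates_from n h (\<lambda>i. if i \<in> J then w i else if i = 0 then s else 0) N"
      by blast
    have "j < n" "j \<noteq> 0"
      using insert.prems by auto
    then obtain p M where p: "p \<in> generated n" "translates_from n p (\<lambda>i. if i = j then w j else if i = 0 then - w j else 0) M"
      using generated_translation_pair by blast
    obtain L where "translates_from n (p \<circ> h)
        (\<lambda>i. (if i \<in> J then w i else if i = 0 then s else 0) + (if i = j then w j else if i = 0 then - w j else 0)) L"
      using translates_from_comp[OF h(2) p(2)] by blast
    then have "translates_from n (p \<circ> h) (\<lambda>i. if i \<in> insert j J then w i else if i = 0 then s - w j else 0) L"
      by (rule translates_from_cong) (use insert in auto)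
    then show ?case
      using comp_in_generated[OF h(1) p(1)] by blast
  qed
qed

definition ray_box :: "nat \<Rightarrow> nat \<Rightarrow> (nat \<times> nat) set" where
  "ray_box n N = {(i, k). i < n \<and> 1 \<le> k \<and> k < N}"

lemma finite_ray_box: "finite (ray_box n N)"
  by (rule finite_subset[of _ "{..<n} \<times> {..<N}"]) (auto simp: ray_box_def)

lemma ray_box_subset_rays: "ray_box n N \<subseteq> rays n"
  by (auto simp: ray_box_def rays_def)

lemma permutes_rays_no_shift:
  fixes \<rho> :: "nat \<times> nat \<Rightarrow> nat \<times> nat" and s :: nat
  assumes perm: "\<rho> permutes rays n" and "0 < n" "1 \<le> N"
    and shift: "\<And>k. N \<le> k \<Longrightarrow> \<rho> (0, k) = (0, k + s)"
    and fixed: "\<And>i k. 0 < i \<Longrightarrow> i < n \<Longrightarrow> N \<le> k \<Longrightarrow> \<rho> (i, k) = (i, k)"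
  shows "s = 0"
proof (rule ccontr)
  assume "s \<noteq> 0"
  \<comment> \<open>then \<open>\<rho>\<close> would map the finite box below level \<open>N\<close> onto a strictly larger set\<close>
  let ?A = "ray_box n N"
  have "insert (0, N) ?A \<subseteq> \<rho> ` ?A"
  proof
    fix y
    assume y: "y \<in> insert (0, N) ?A"
    then have "y \<in> rays n"
      using assms by (auto simp: ray_box_def rays_def)
    then obtain i k where x: "\<rho> (i, k) = y" "(i, k) \<in> rays n"
      using permutes_image[OF perm] by (metis imageE surj_pair)
    have "k < N"
    proof (rule ccontr)
      assume "\<not> k < N"
      then show False
        using y x \<open>s \<noteq> 0\<close> shift[of k] fixed[of i k] by (cases "i = 0") (auto simp: ray_box_def rays_def)
    qed
    then show "y \<in> \<rho> ` ?A"
      using x by (auto simp: ray_box_def rays_def)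
  qed
  then have "card (insert (0, N) ?A) \<le> card ?A"
    using finite_ray_box by (metis card_image_le card_mono finite_imageI le_trans)
  then show False
    using finite_ray_box by (simp add: ray_box_def)
qed

lemma permutes_rays_translation_zero:
  assumes perm: "\<rho> permutes rays n" and "0 < n"
    and tr: "translates_from n \<rho> (\<lambda>i. if i = 0 then s else 0) N"
  shows "s = 0"
proof (cases "s \<ge> 0")
  case True
  have "nat s = 0"
  proof (rule permutes_rays_no_shift[OF perm \<open>0 < n\<close>, of "max N 1"])
    show "\<rho> (0, k) = (0, k + nat s)" if "max N 1 \<le> k" for k
      using tr that True \<open>0 < n\<close> unfolding translates_from_def by (auto simp: nat_add_distrib)
    show "\<rho> (i, k) = (i, k)" if "0 < i" "i < n" "max N 1 \<le> k" for i k
      using tr that unfolding translates_from_def by auto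
  qed simp
  then show ?thesis
    using True by simp
next
  case False
  have "nat (- s) = 0"
  proof (rule permutes_rays_no_shift[OF permutes_inv[OF perm] \<open>0 < n\<close>, of "max N 1"])
    show "inv \<rho> (0, k) = (0, k + nat (- s))" if "max N 1 \<le> k" for k
      using tr that False \<open>0 < n\<close> unfolding translates_from_def permutes_inv_eq[OF perm]
      by (auto dest!: spec[of _ 0] spec[of _ "k + nat (- s)"])
    show "inv \<rho> (i, k) = (i, k)" if "0 < i" "i < n" "max N 1 \<le> k" for i k
      using tr that unfolding translates_from_def permutes_inv_eq[OF perm] by auto
  qed simp
  then show ?thesis
    using False by simp
qed

lemma permutes_ray_box:
  assumes perm: "\<rho> permutes rays n" and tr: "translates_from n \<rho> (\<lambda>i. 0) N"
  shows "\<rho> permutes ray_box n N"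
proof (rule permutes_superset[OF perm])
  fix x
  assume "x \<in> rays n - ray_box n N"
  moreover obtain i k where "x = (i, k)"
    by (cases x)
  ultimately have "i < n" "N \<le> k"
    by (auto simp: rays_def ray_box_def)
  then show "\<rho> x = x"
    using tr \<open>x = (i, k)\<close> by (simp add: translates_from_def)
qed

theorem houghton_subset_generated:
  assumes n: "n \<ge> 3"
  shows "houghton n \<subseteq> generated n"
proof
  fix \<sigma>
  assume \<sigma>: "\<sigma> \<in> houghton n"
  obtain t N where "translates_from n \<sigma> t N"
    using \<sigma> by (rule houghton_translates_from)
  moreover obtain h s M where h: "h \<in> generated n"
    "translates_from n h (\<lambda>i. if i \<in> {1..<n} then - t i else if i = 0 then s else 0) M"
    using generated_translation_exists[where J = "{1..<n}" and w = "\<lambda>i. - t i"] by blast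
  ultimately obtain L where
    "translates_from n (h \<circ> \<sigma>) (\<lambda>i. t i + (if i \<in> {1..<n} then - t i else if i = 0 then s else 0)) L"
    using translates_from_comp by blast
  then have L: "translates_from n (h \<circ> \<sigma>) (\<lambda>i. if i = 0 then t 0 + s else 0) L"
    by (rule translates_from_cong) auto
  have perm: "h \<circ> \<sigma> permutes rays n"
    using houghton_permutes_rays[OF \<sigma>] generated_permutes_rays[OF h(1)] by (rule permutes_compose)
  then have "t 0 + s = 0"
    using L n by (intro permutes_rays_translation_zero) auto
  with L have "translates_from n (h \<circ> \<sigma>) (\<lambda>i. 0) L"
    by (auto elim: translates_from_cong)
  with perm have "h \<circ> \<sigma> permutes ray_box n L"
    by (rule permutes_ray_box)
  then have "h \<circ> \<sigma> \<in> generated n"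
    by (rule permutes_in_generated[OF n finite_ray_box ray_box_subset_rays])
  moreover obtain h' where "h' \<in> generated n" "h' \<circ> h = id"
    using generated_has_inverse[OF h(1)] by blast
  moreover have "\<sigma> = h' \<circ> (h \<circ> \<sigma>)"
    using \<open>h' \<circ> h = id\<close> by (simp add: comp_assoc[symmetric])
  ultimately show "\<sigma> \<in> generated n"
    by (metis comp_in_generated)
qed

section \<open>Counting reduced words\<close>

fun reduced :: "('a \<Rightarrow> 'a) list \<Rightarrow> bool" where
  "reduced (a # b # ws) \<longleftrightarrow> b \<circ> a \<noteq> id \<and> reduced (b # ws)"
| "reduced _ \<longleftrightarrow> True"

lemma not_reduced_split: "\<not> reduced ws \<Longrightarrow> \<exists>xs a b ys. ws = xs @ a # b # ys \<and> b \<circ> a = id"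
proof (induction ws rule: reduced.induct)
  case (1 a b ws)
  show ?case
  proof (cases "b \<circ> a = id")
    case True
    then show ?thesis
      by (metis append_Nil)
  next
    case False
    then have "\<not> reduced (b # ws)"
      using "1.prems" by simp
    then obtain xs c d ys where "b # ws = xs @ c # d # ys" "d \<circ> c = id"
      using "1.IH" False by blast
    then show ?thesis
      by (metis append_Cons)
  qed
qed auto

lemma shortest_word_reduced:
  assumes "\<sigma> \<in> generated n"
  obtains ws where "length ws = word_length n \<sigma>" "set ws \<subseteq> sym_gens n" "word_eval ws = \<sigma>" "reduced ws"
proof -
  let ?P = "\<lambda>m. \<exists>ws. length ws = m \<and> set ws \<subseteq> sym_gens n \<and> word_eval ws = \<sigma>"
  have "\<exists>m. ?P m"
    using assms unfolding generated_def by blast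
  then have "?P (word_length n \<sigma>)"
    unfolding word_length_def by (rule LeastI_ex)
  then obtain ws where ws: "length ws = word_length n \<sigma>" "set ws \<subseteq> sym_gens n" "word_eval ws = \<sigma>"
    by blast
  have "reduced ws"
  proof (rule ccontr)
    assume "\<not> reduced ws"
    then obtain xs a b ys where split: "ws = xs @ a # b # ys" "b \<circ> a = id"
      using not_reduced_split by blast
    then have "word_eval (xs @ ys) = \<sigma>"
      using ws(3) by (simp add: comp_assoc)
    moreover have "set (xs @ ys) \<subseteq> sym_gens n"
      using ws(2) split(1) by auto
    ultimately have "word_length n \<sigma> \<le> length (xs @ ys)"
      unfolding word_length_def by (blast intro: Least_le)
    then show False
      using ws(1) split(1) by simp
  qed
  then show ?thesis
    using ws that by blast
qed

definition reduced_words :: "('a \<Rightarrow> 'a) set \<Rightarrow> nat \<Rightarrow> ('a \<Rightarrow> 'a) list set" where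
  "reduced_words S L = {ws. length ws = L \<and> set ws \<subseteq> S \<and> reduced ws}"

lemma finite_reduced_words: "finite S \<Longrightarrow> finite (reduced_words S L)"
  unfolding reduced_words_def by (rule finite_subset[OF _ finite_lists_length_eq[of S L]]) auto

lemma card_reduced_words_Suc:
  assumes S: "finite S" and inverse: "\<And>t. t \<in> S \<Longrightarrow> \<exists>s\<in>S. t \<circ> s = id"
  shows "card (reduced_words S (Suc L)) \<le> card S * (card S - 1) ^ L"
proof (induction L)
  case 0
  have "reduced_words S 1 = (\<lambda>s. [s]) ` S"
    unfolding reduced_words_def by (auto simp: length_Suc_conv)
  then show ?case
    using S by (simp add: card_image_le)
next
  case (Suc L)
  let ?ok = "\<lambda>ws. {s \<in> S. hd ws \<circ> s \<noteq> id}"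
  let ?pairs = "SIGMA ws:reduced_words S (Suc L). ?ok ws"
  have sub: "reduced_words S (Suc (Suc L)) \<subseteq> (\<lambda>(ws, s). s # ws) ` ?pairs"
  proof
    fix vs
    assume "vs \<in> reduced_words S (Suc (Suc L))"
    then obtain s t ws where vs: "vs = s # t # ws" "length ws = L" "set vs \<subseteq> S" "reduced vs"
      unfolding reduced_words_def by (auto simp: length_Suc_conv)
    then have "(t # ws, s) \<in> ?pairs"
      unfolding reduced_words_def by auto
    then show "vs \<in> (\<lambda>(ws, s). s # ws) ` ?pairs"
      unfolding vs(1) by (rule rev_image_eqI) simp
  qed
  have fin: "finite ?pairs"
    using S by (intro finite_SigmaI finite_reduced_words) auto
  have "card (reduced_words S (Suc (Suc L))) \<le> card ?pairs"
    using card_mono[OF finite_imageI[OF fin] sub] card_image_le[OF fin, where f = "\<lambda>(ws, s). s # ws"] by linarith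
  also have "\<dots> = (\<Sum>ws\<in>reduced_words S (Suc L). card (?ok ws))"
    using S by (intro card_SigmaI finite_reduced_words) auto
  also have "\<dots> \<le> (\<Sum>ws\<in>reduced_words S (Suc L). card S - 1)"
  proof (rule sum_mono)
    fix ws
    assume "ws \<in> reduced_words S (Suc L)"
    then have "hd ws \<in> S"
      unfolding reduced_words_def by (cases ws) auto
    then obtain s where "s \<in> S" "hd ws \<circ> s = id"
      using inverse by blast
    then have "?ok ws \<subseteq> S - {s}"
      by auto
    then show "card (?ok ws) \<le> card S - 1"
      using S \<open>s \<in> S\<close> by (metis card_Diff_singleton card_mono finite_Diff)
  qed
  also have "\<dots> \<le> (card S - 1) * (card S * (card S - 1) ^ L)"
    using Suc by simp
  finally show ?case
    by (simp add: algebra_simps)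
qed

lemma finite_sym_gens: "finite (sym_gens n)"
  by (simp add: sym_gens_eq)

lemma card_sym_gens_le: "card (sym_gens n) \<le> 2 * n - 2"
proof -
  have "card (sym_gens n) \<le> (\<Sum>i\<in>{1..<n}. card {gij i ((i + 1) mod n), gij ((i + 1) mod n) i})"
    unfolding sym_gens_eq by (rule card_UN_le) simp
  also have "\<dots> \<le> (\<Sum>i\<in>{1..<n}. 2)"
    by (rule sum_mono) (simp add: card_insert_le_m1)
  finally show ?thesis
    by simp
qed

lemma card_reduced_sym_gens_words_le:
  assumes "n \<ge> 3"
  shows "card (reduced_words (sym_gens n) L) \<le> 2 * (2 * n - 3) ^ L"
proof (cases L)
  case 0
  then have "reduced_words (sym_gens n) L = {[]}"
    by (auto simp: reduced_words_def)
  then show ?thesis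
    using 0 by simp
next
  case (Suc L')
  have "card (reduced_words (sym_gens n) L) \<le> card (sym_gens n) * (card (sym_gens n) - 1) ^ L'"
    unfolding Suc by (rule card_reduced_words_Suc[OF finite_sym_gens]) (use sym_gens_has_inverse in blast)
  also have "\<dots> \<le> (2 * n - 2) * (2 * n - 3) ^ L'"
    using card_sym_gens_le[of n] by (intro mult_mono power_mono) auto
  also have "\<dots> \<le> 2 * (2 * n - 3) * (2 * n - 3) ^ L'"
    using assms by (intro mult_right_mono) auto
  finally show ?thesis
    using Suc by (simp add: mult.assoc)
qed

lemma sum_two_powers_less: "(b :: nat) \<ge> 3 \<Longrightarrow> (\<Sum>L\<le>R. 2 * b ^ L) < b ^ Suc R"
proof (induction R)
  case (Suc R)
  then have "(\<Sum>L\<le>Suc R. 2 * b ^ L) < 3 * b ^ Suc R"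
    by simp
  also have "\<dots> \<le> b ^ Suc (Suc R)"
    using Suc.prems by simp
  finally show ?case .
qed simp

lemma card_Dset_le:
  assumes n: "n \<ge> 3"
  shows "card (Dset n k) \<le> (2 * n - 3) ^ Suc (nat \<lfloor>real k * log (real (2 * n - 2)) (real k)\<rfloor>)"
proof -
  define R where "R = nat \<lfloor>real k * log (real (2 * n - 2)) (real k)\<rfloor>"
  define W where "W = (\<Union>L\<le>R. reduced_words (sym_gens n) L)"
  have "Dset n k \<subseteq> word_eval ` W"
  proof
    fix \<sigma>
    assume \<sigma>: "\<sigma> \<in> Dset n k"
    then have "\<sigma> \<in> generated n"
      using houghton_subset_generated[OF n] by (auto simp: Dset_def Cset_def)
    then obtain ws where ws: "length ws = word_length n \<sigma>" "set ws \<subseteq> sym_gens n" "word_eval ws = \<sigma>" "reduced ws"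
      by (rule shortest_word_reduced)
    have "word_length n \<sigma> \<le> R"
      using \<sigma> unfolding R_def Dset_def by (simp add: le_nat_floor)
    then show "\<sigma> \<in> word_eval ` W"
      using ws unfolding W_def reduced_words_def by auto
  qed
  moreover have "finite W"
    unfolding W_def by (simp add: finite_reduced_words finite_sym_gens)
  ultimately have "card (Dset n k) \<le> card W"
    by (meson card_image_le card_mono finite_imageI le_trans)
  also have "\<dots> \<le> (\<Sum>L\<le>R. card (reduced_words (sym_gens n) L))"
    unfolding W_def by (rule card_UN_le) simp
  also have "\<dots> \<le> (\<Sum>L\<le>R. 2 * (2 * n - 3) ^ L)"
    by (intro sum_mono card_reduced_sym_gens_words_le n)
  also have "\<dots> < (2 * n - 3) ^ Suc R"
    using n by (intro sum_two_powers_less) simp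
  finally show ?thesis
    unfolding R_def by (rule less_imp_le)
qed

section \<open>Many elements of complexity \<open>k\<close>\<close>

lemma transl_eq_0:
  assumes "\<And>k. k > K \<Longrightarrow> p (i, k) = (i, k)"
  shows "transl p i = 0"
  unfolding transl_def
proof (rule the_equality)
  show "\<exists>N. \<forall>k. N \<le> k \<and> 1 \<le> k \<longrightarrow> 1 \<le> int k + 0 \<and> p (i, k) = (i, nat (int k + 0))"
    using assms by (intro exI[of _ "Suc K"]) auto
next
  fix t
  assume "\<exists>N. \<forall>k. N \<le> k \<and> 1 \<le> k \<longrightarrow> 1 \<le> int k + t \<and> p (i, k) = (i, nat (int k + t))"
  then obtain N where "\<forall>k. N \<le> k \<and> 1 \<le> k \<longrightarrow> 1 \<le> int k + t \<and> p (i, k) = (i, nat (int k + t))"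
    by blast
  then have "1 \<le> int (N + K + 1) + t \<and> p (i, N + K + 1) = (i, nat (int (N + K + 1) + t))"
    by (erule_tac allE[of _ "N + K + 1"]) simp
  moreover have "p (i, N + K + 1) = (i, N + K + 1)"
    using assms by simp
  ultimately show "t = 0"
    by auto
qed

lemma permutes_ray_zero_prefix_in_Cset:
  assumes "n \<ge> 1" "k \<ge> 1"
    and p: "p permutes (\<lambda>j. (0, j)) ` {1..k}" and moved: "p (0, k) \<noteq> (0, k)"
  shows "p \<in> Cset n k"
proof -
  have fixed: "p (i, j) = (i, j)" if "i \<noteq> 0 \<or> j < 1 \<or> k < j" for i j
    using that by (intro permutes_not_in[OF p]) auto
  have perm: "p permutes rays n"
    by (rule permutes_subset[OF p]) (use assms(1) in \<open>auto simp: rays_def\<close>)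
  have "p \<in> houghton n"
    unfolding houghton_def
  proof (intro CollectI conjI)
    show "bij_betw p (rays n) (rays n)"
      using perm by (rule permutes_imp_bij)
    show "\<forall>x. x \<notin> rays n \<longrightarrow> p x = x"
      using perm by (simp add: permutes_not_in)
    show "\<exists>N t. \<forall>i<n. \<forall>j. N \<le> j \<and> 1 \<le> j \<longrightarrow> 1 \<le> int j + t i \<and> p (i, j) = (i, nat (int j + t i))"
      using fixed by (intro exI[of _ "Suc k"] exI[of _ "\<lambda>i. 0"]) simp
  qed
  have "transl p i = 0" for i
    by (rule transl_eq_0[of k]) (simp add: fixed)
  then have defect_iff: "defect p i j \<longleftrightarrow> p (i, j) \<noteq> (i, j)" if "j \<ge> 1" for i j
    using that by (simp add: defect_def)
  have "pcomp p 0 = k"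
  proof -
    have "{j. 1 \<le> j \<and> defect p 0 j} \<subseteq> {1..k}"
    proof
      fix j
      assume "j \<in> {j. 1 \<le> j \<and> defect p 0 j}"
      then have "1 \<le> j" "p (0, j) \<noteq> (0, j)"
        using defect_iff by auto
      then show "j \<in> {1..k}"
        using fixed[of 0 j] by (cases "k < j") auto
    qed
    moreover have "k \<in> {j. 1 \<le> j \<and> defect p 0 j}"
      using defect_iff moved assms(2) by simp
    ultimately have "Max {j. 1 \<le> j \<and> defect p 0 j} = k"
      by (intro Max_eqI) (auto dest: finite_subset)
    then show ?thesis
      using \<open>k \<in> _\<close> unfolding pcomp_def by auto
  qed
  moreover have "pcomp p i = 0" if "i \<noteq> 0" for i
  proof -
    have "\<not> defect p i j" if "j \<ge> 1" for j
      using defect_iff[OF that] fixed \<open>i \<noteq> 0\<close> by simp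
    then show ?thesis
      by (auto simp: pcomp_def)
  qed
  ultimately have "complexity n p = (\<Sum>i<n. if i = 0 then k else 0)"
    unfolding complexity_def by (intro sum.cong) auto
  then show ?thesis
    using \<open>p \<in> houghton n\<close> assms(1) by (simp add: Cset_def)
qed

lemma card_Cset_ge_fact:
  assumes "n \<ge> 1" "k \<ge> 2" "finite (Cset n k)"
  shows "fact (k - 1) \<le> card (Cset n k)"
proof -
  let ?S = "(\<lambda>j. (0::nat, j)) ` {1..k}"
  let ?S' = "(\<lambda>j. (0::nat, j)) ` {1..k - 1}"
  let ?\<tau> = "Transposition.transpose (0::nat, k - 1) (0, k)"
  have "card ?S' = k - 1"
    by (subst card_image) (auto simp: inj_on_def)
  then have "card {q. q permutes ?S'} = fact (k - 1)"
    by (simp add: card_permutations)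
  moreover have "inj_on (\<lambda>q. q \<circ> ?\<tau>) {q. q permutes ?S'}"
  proof (rule inj_onI)
    fix q q' :: "nat \<times> nat \<Rightarrow> nat \<times> nat"
    assume "q \<circ> ?\<tau> = q' \<circ> ?\<tau>"
    then have "(q \<circ> ?\<tau>) \<circ> ?\<tau> = (q' \<circ> ?\<tau>) \<circ> ?\<tau>"
      by simp
    then show "q = q'"
      by (simp add: comp_assoc)
  qed
  moreover have "(\<lambda>q. q \<circ> ?\<tau>) ` {q. q permutes ?S'} \<subseteq> Cset n k"
  proof clarify
    fix q
    assume q: "q permutes ?S'"
    have "q (0, k - 1) \<in> ?S'"
      using assms(2) by (intro permutes_in_image[OF q, THEN iffD2]) auto
    then have "(q \<circ> ?\<tau>) (0, k) \<noteq> (0, k)"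
      by auto
    moreover have "q \<circ> ?\<tau> permutes ?S"
      using assms(2) by (intro permutes_compose permutes_swap_id permutes_subset[OF q]) auto
    ultimately show "q \<circ> ?\<tau> \<in> Cset n k"
      using assms(1,2) by (intro permutes_ray_zero_prefix_in_Cset) auto
  qed
  ultimately show ?thesis
    using card_mono[OF assms(3)] card_image by metis
qed

section \<open>Asymptotics\<close>

lemma power_div_fact_le_exp:
  fixes x :: real
  assumes "0 \<le> x"
  shows "x ^ k / fact k \<le> exp x"
proof -
  have "(\<Sum>i\<in>{k}. x ^ i / fact i) \<le> (\<Sum>i. x ^ i / fact i)"
    using assms by (intro sum_le_suminf) (auto simp: summable_exp divide_inverse mult.commute)
  then show ?thesis
    by (simp add: exp_def inverse_eq_divide scaleR_conv_of_real mult.commute)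
qed

lemma power_le_exp_mult_fact: "real k ^ k \<le> exp (real k) * fact k"
  using power_div_fact_le_exp[of "real k" k] by (simp add: divide_le_eq)

lemma power_nat_floor_le_powr:
  fixes b x :: real
  assumes "1 \<le> b" "0 \<le> x"
  shows "b ^ nat \<lfloor>x\<rfloor> \<le> b powr x"
proof -
  have "real (nat \<lfloor>x\<rfloor>) \<le> x"
    using assms(2) by linarith
  then show ?thesis
    using assms(1) by (simp add: powr_realpow[symmetric] powr_mono)
qed

lemma Dset_Cset_ratio_le:
  fixes n k :: nat
  assumes n: "n \<ge> 3" and k: "k \<ge> 2"
  defines "b \<equiv> real (2 * n - 3)" and "c \<equiv> 1 - ln (real (2 * n - 3)) / ln (real (2 * n - 2))"
  shows "real (card (Dset n k)) / real (card (Cset n k)) \<le> b * (real k * exp (real k - c * (real k * ln (real k))))"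
proof (cases "finite (Cset n k)")
  case False
  \<comment> \<open>\<open>card\<close> of an infinite set is \<open>0\<close>, and so is the ratio\<close>
  then show ?thesis
    using b_def by simp
next
  case True
  define R where "R = nat \<lfloor>real k * log (real (2 * n - 2)) (real k)\<rfloor>"
  have b3: "b \<ge> 3" and kpos: "real k > 0"
    using n k by (simp_all add: b_def)
  have "b ^ R \<le> b powr (real k * log (real (2 * n - 2)) (real k))"
    unfolding R_def using b3 n k by (intro power_nat_floor_le_powr) auto
  also have "\<dots> = exp ((1 - c) * (real k * ln (real k)))"
    using b3 by (simp add: powr_def c_def b_def log_def)
  finally have bR: "b ^ R \<le> exp ((1 - c) * (real k * ln (real k)))" .
  have kk: "exp (real k * ln (real k)) \<le> exp (real k) * fact k"
    using power_le_exp_mult_fact[of k] kpos by (simp add: exp_of_nat_mult)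
  have "fact (k - 1) \<le> real (card (Cset n k))"
    using card_Cset_ge_fact[of n k] n k True by (metis of_nat_fact of_nat_le_iff le_trans one_le_numeral)
  then have "real (card (Dset n k)) / real (card (Cset n k)) \<le> real (card (Dset n k)) / fact (k - 1)"
    by (simp add: frac_le)
  also have "\<dots> \<le> b * b ^ R / fact (k - 1)"
  proof (rule divide_right_mono)
    show "real (card (Dset n k)) \<le> b * b ^ R"
      using card_Dset_le[OF n, of k] unfolding b_def R_def by (metis of_nat_le_iff of_nat_power power_Suc)
  qed simp
  also have "\<dots> = b * b ^ R * real k / fact k"
    using k by (simp add: fact_reduce)
  also have "\<dots> = (b * real k) * (b ^ R * (1 / fact k))"
    by simp
  also have "\<dots> \<le> (b * real k) * (exp ((1 - c) * (real k * ln (real k))) * (exp (real k) / exp (real k * ln (real k))))"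
  proof -
    have "1 / fact k \<le> exp (real k) / exp (real k * ln (real k))"
      using kk by (simp add: field_simps)
    then show ?thesis
      using bR b3 kpos by (intro mult_left_mono mult_mono) auto
  qed
  also have "exp ((1 - c) * (real k * ln (real k))) * (exp (real k) / exp (real k * ln (real k)))
      = exp ((1 - c) * (real k * ln (real k)) + real k - real k * ln (real k))"
    by (simp add: exp_add exp_diff)
  also have "(1 - c) * (real k * ln (real k)) + real k - real k * ln (real k) = real k - c * (real k * ln (real k))"
    by (simp add: algebra_simps)
  finally show ?thesis
    by (simp add: mult.assoc)
qed

lemma tendsto_mult_exp_neg:
  fixes c :: real
  assumes "c > 0"
  shows "(\<lambda>k. real k * exp (real k - c * (real k * ln (real k)))) \<longlonglongrightarrow> 0"
proof (rule tendsto_sandwich[OF _ _ tendsto_const lim_const_over_n[of 1]])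
  show "\<forall>\<^sub>F k in sequentially. 0 \<le> real k * exp (real k - c * (real k * ln (real k)))"
    by simp
  show "\<forall>\<^sub>F k in sequentially. real k * exp (real k - c * (real k * ln (real k))) \<le> 1 / real k"
  proof (rule eventually_sequentiallyI[of "nat \<lceil>exp (3 / c)\<rceil> + 1"])
    fix k
    assume "nat \<lceil>exp (3 / c)\<rceil> + 1 \<le> k"
    then have kpos: "real k > 0" and "exp (3 / c) \<le> real k"
      by linarith+
    then have "3 \<le> c * ln (real k)"
      using assms by (metis exp_le_cancel_iff exp_ln pos_divide_le_eq mult.commute)
    moreover have "ln (real k) \<le> real k"
      using kpos ln_less_self by (simp add: less_imp_le)
    moreover have "0 \<le> ln (real k)"
      using \<open>nat \<lceil>exp (3 / c)\<rceil> + 1 \<le> k\<close> by simp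
    moreover have "3 * real k \<le> c * (real k * ln (real k))"
      using mult_right_mono[OF \<open>3 \<le> c * ln (real k)\<close>, of "real k"] kpos by (simp add: algebra_simps)
    ultimately have "real k - c * (real k * ln (real k)) \<le> - (ln (real k) + ln (real k))"
      by linarith
    then have "exp (real k - c * (real k * ln (real k))) \<le> exp (- (ln (real k) + ln (real k)))"
      by simp
    also have "\<dots> = 1 / (real k * real k)"
      using kpos by (simp only: exp_minus exp_add exp_ln inverse_eq_divide)
    finally show "real k * exp (real k - c * (real k * ln (real k))) \<le> 1 / real k"
      using kpos by (simp add: field_simps)
  qed
qed

theorem mainTheorem6:
  fixes n :: nat
  assumes "n \<ge> 3"
  shows "(\<lambda>k. real (card (Dset n k)) / real (card (Cset n k))) \<longlonglongrightarrow> 0"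
proof -
  define b where "b = real (2 * n - 3)"
  define B where "B = real (2 * n - 2)"
  define c where "c = 1 - ln b / ln B"
  have "ln b < ln B" "0 < ln B"
    using assms by (auto simp: b_def B_def)
  then have "c > 0"
    unfolding c_def by (simp add: divide_less_eq)
  then have lim: "(\<lambda>k. b * (real k * exp (real k - c * (real k * ln (real k))))) \<longlonglongrightarrow> 0"
    by (rule tendsto_mult_right_zero[OF tendsto_mult_exp_neg])
  have upper: "\<forall>\<^sub>F k in sequentially.
      real (card (Dset n k)) / real (card (Cset n k)) \<le> b * (real k * exp (real k - c * (real k * ln (real k))))"
    unfolding b_def B_def c_def by (rule eventually_sequentiallyI[of 2]) (rule Dset_Cset_ratio_le[OF assms])
  have lower: "\<forall>\<^sub>F k in sequentially. 0 \<le> real (card (Dset n k)) / real (card (Cset n k))"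
    by simp
  show ?thesis
    by (rule tendsto_sandwich[OF lower upper tendsto_const lim])
qed

end
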